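(* Let $(R,pR)$ be a discrete valuation domain with valuation $\mathsf{v}$ and finite residue field. Let $f\in R[x]$ be a primitive, non-constant polynomial with irreducible divisor set $\mathcal{P}$ and write $f=\prod_{g\in\mathcal{P}}g^{m_g}$ with multiplicity vector $\mathbf{m}=(m_g)_{g\in\mathcal{P}}\in\mathbb{N}^{\mathcal{P}}$. Assume $n:=\mathsf{v}(\operatorname{d}(f))\in\mathbb{N}$ (so $n\ge 1$) and set $F=\frac{f}{p^n}\in\operatorname{Int}(R)$. If $\operatorname{fdk}(f)\neq\mathbf{0}$, then $F$ is not absolutely irreducible in $\operatorname{Int}(R)$. More precisely, if $F$ is irreducible in $\operatorname{Int}(R)$ and $\mathbf{0}\neq\mathbf{v}\in\operatorname{fdk}(f)\cap\mathbb{Z}^{\mathcal{P}}$, then $F^j$ factors non-uniquely in $\operatorname{Int}(R)$ for every $j\in\mathbb{N}$ with $$j\ \ge\ (n+1)\left(\left\lceil\Big\|\tfrac{\mathbf{v}^+}{\mathbf{m}}\Big\|_\infty\right\rceil+\left\lceil\Big\|\tfrac{\mathbf{v}^-}{\mathbf{m}}\Big\|_\infty\right\rceil\right).$$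
   Context: $(R,pR)$ is a discrete valuation domain with valuation $\mathsf{v}$, finite residue field, and quotient field $K$. $\operatorname{Int}(R)=\{F\in K[x]\mid F(R)\subseteq R\}$; its units are the units of $R$. For $f\in R[x]$, the fixed divisor $\operatorname{d}(f)$ is $\gcd(f(a)\mid a\in R)$, so $\mathsf{v}(\operatorname{d}(f))=\min_{a\in R}\mathsf{v}(f(a))$. A polynomial in $R[x]$ is primitive if its coefficients generate $R$ as an ideal. An irreducible divisor set $\mathcal{P}$ of $f$ is a set of representatives of the associate classes (in $R[x]$) of the irreducible divisors of $f$ in $R[x]$. For $a\in R$ let $\mathsf{v}_{\mathcal{P}}(a)=(\mathsf{v}(g(a)))_{g\in\mathcal{P}}$. The set of fixed divisor witnesses is $\mathcal{W}(f)=\{a\in R\mid \mathsf{v}(f(a))=\mathsf{v}(\operatorname{d}(f))\}$. The fixed divisor kernel is the $\mathbb{Q}$-subspace $$\operatorname{fdk}(f)=\Big\{\mathbf{u}=(u_g)_{g\in\mathcal{P}}\in\mathbb{Q}^{\mathcal{P}}\ \Big|\ \forall a\in\mathcal{W}(f):\ \textstyle\sum_{g\in\mathcal{P}}u_g\,\mathsf{v}(g(a))=0\Big\}.$$ For $\mathbf{u}\in\mathbb{Q}^{\mathcal{P}}$: $\mathbf{u}^+=\max(\mathbf{u},\mathbf{0})$ and $\mathbf{u}^-=-\min(\mathbf{u},\mathbf{0})$ componentwise; $\|\mathbf{u}\|_\infty=\max_g|u_g|$; for $\mathbf{w}$ with all entries nonzero, $\frac{\mathbf{u}}{\mathbf{w}}=(u_g/w_g)_{g\in\mathcal{P}}$.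 In a commutative ring, two factorizations into irreducibles $a_1\cdots a_k=b_1\cdots b_l$ are essentially the same if $k=l$ and after reindexing $a_i$ and $b_i$ are associated; an element "factors non-uniquely" if it has two essentially different factorizations into irreducibles. An irreducible $r$ is absolutely irreducible if for every $k\in\mathbb{N}$ every factorization of $r^k$ is essentially the same as $r\cdots r$. *)

theory Defs
  imports "HOL-Computational_Algebra.Computational_Algebra" "HOL-Library.Extended_Nat"
begin

definition dvr_uniformizer :: "'a::idom \<Rightarrow> bool" where
  "dvr_uniformizer p \<longleftrightarrow> p \<noteq> 0 \<and> \<not> p dvd 1 \<and>
     (\<forall>x. x \<noteq> 0 \<longrightarrow> (\<exists>u k. u dvd 1 \<and> x = u * p ^ k))"

definition finite_residue_field :: "'a::idom \<Rightarrow> bool" where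
  "finite_residue_field p \<longleftrightarrow> finite (UNIV // {(x, y). p dvd x - y})"

text \<open>Exponent of p in x (for x nonzero): largest k with p^k dividing x.\<close>
definition pexp :: "'a::idom \<Rightarrow> 'a \<Rightarrow> nat" where
  "pexp p x = Max {k. p ^ k dvd x}"

definition val :: "'a::idom \<Rightarrow> 'a \<Rightarrow> enat" where
  "val p x = (if x = 0 then \<infinity> else enat (pexp p x))"

text \<open>v(d(f)) = min over a in R of v(f(a)).\<close>
definition fixdiv_val :: "'a::idom \<Rightarrow> 'a poly \<Rightarrow> enat" where
  "fixdiv_val p f = (INF a. val p (poly f a))"

definition witnesses :: "'a::idom \<Rightarrow> 'a poly \<Rightarrow> 'a set" where
  "witnesses p f = {a. val p (poly f a) = fixdiv_val p f}"

text \<open>Vectors in Q^P are functions vanishing outside P.\<close>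
definition fdk :: "'a::idom \<Rightarrow> 'a poly \<Rightarrow> 'a poly set \<Rightarrow> ('a poly \<Rightarrow> rat) set" where
  "fdk p f P = {u. (\<forall>g. g \<notin> P \<longrightarrow> u g = 0) \<and>
      (\<forall>a \<in> witnesses p f. (\<Sum>g\<in>P. u g * of_nat (pexp p (poly g a))) = 0)}"

text \<open>Primitive: the coefficients generate R as an ideal.\<close>
definition primitive :: "'a::idom poly \<Rightarrow> bool" where
  "primitive f \<longleftrightarrow> (\<exists>c. (\<Sum>i\<le>degree f. c i * coeff f i) = 1)"

definition irred_divisor_set :: "'a::idom poly \<Rightarrow> 'a poly set \<Rightarrow> bool" where
  "irred_divisor_set f P \<longleftrightarrow>
     (\<forall>g\<in>P. irreducible g \<and> g dvd f) \<and>
     (\<forall>g\<in>P. \<forall>h\<in>P. g dvd h \<and> h dvd g \<longrightarrow> g = h) \<and>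
     (\<forall>h. irreducible h \<and> h dvd f \<longrightarrow> (\<exists>g\<in>P. g dvd h \<and> h dvd g))"

definition intR :: "'a::idom fract poly set" where
  "intR = {F. \<forall>a. poly F (to_fract a) \<in> range to_fract}"

definition unit_in :: "'b::comm_ring_1 set \<Rightarrow> 'b \<Rightarrow> bool" where
  "unit_in S x \<longleftrightarrow> x \<in> S \<and> (\<exists>y\<in>S. x * y = 1)"

definition assoc_in :: "'b::comm_ring_1 set \<Rightarrow> 'b \<Rightarrow> 'b \<Rightarrow> bool" where
  "assoc_in S x y \<longleftrightarrow> (\<exists>u. unit_in S u \<and> x = u * y)"

definition irred_in :: "'b::comm_ring_1 set \<Rightarrow> 'b \<Rightarrow> bool" where
  "irred_in S x \<longleftrightarrow> x \<in> S \<and> x \<noteq> 0 \<and> \<not> unit_in S x \<and>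
     (\<forall>a\<in>S. \<forall>b\<in>S. x = a * b \<longrightarrow> unit_in S a \<or> unit_in S b)"

definition factorization_in :: "'b::comm_ring_1 set \<Rightarrow> 'b \<Rightarrow> 'b list \<Rightarrow> bool" where
  "factorization_in S x xs \<longleftrightarrow> (\<forall>y\<in>set xs. irred_in S y) \<and> prod_list xs = x"

definition ess_same_in :: "'b::comm_ring_1 set \<Rightarrow> 'b list \<Rightarrow> 'b list \<Rightarrow> bool" where
  "ess_same_in S xs ys \<longleftrightarrow> length xs = length ys \<and>
     (\<exists>\<sigma>. bij_betw \<sigma> {..<length xs} {..<length xs} \<and>
        (\<forall>i<length xs. assoc_in S (xs ! i) (ys ! \<sigma> i)))"

definition factors_nonuniquely_in :: "'b::comm_ring_1 set \<Rightarrow> 'b \<Rightarrow> bool" where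
  "factors_nonuniquely_in S x \<longleftrightarrow>
     (\<exists>xs ys. factorization_in S x xs \<and> factorization_in S x ys \<and> \<not> ess_same_in S xs ys)"

definition abs_irred_in :: "'b::comm_ring_1 set \<Rightarrow> 'b \<Rightarrow> bool" where
  "abs_irred_in S r \<longleftrightarrow> irred_in S r \<and>
     (\<forall>k::nat. \<forall>xs. factorization_in S (r ^ k) xs \<longrightarrow> ess_same_in S xs (replicate k r))"

text \<open>The sup-norm of u^+/m and u^-/m over P (entries nonnegative, so 0 is a harmless default).\<close>
definition norm_pos_ratio :: "'c set \<Rightarrow> ('c \<Rightarrow> int) \<Rightarrow> ('c \<Rightarrow> nat) \<Rightarrow> rat" where
  "norm_pos_ratio P v m = Max (insert 0 ((\<lambda>g. of_int (max (v g) 0) / of_nat (m g)) ` P))"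

definition norm_neg_ratio :: "'c set \<Rightarrow> ('c \<Rightarrow> int) \<Rightarrow> ('c \<Rightarrow> nat) \<Rightarrow> rat" where
  "norm_neg_ratio P v m = Max (insert 0 ((\<lambda>g. of_int (- min (v g) 0) / of_nat (m g)) ` P))"

end

theory Submission
  imports Defs
begin

text \<open>Let v be a nonzero integral vector in the fixed divisor kernel, s and t the ceilings of the
  two norms, k0 = (n+1)s and J = j - k0. Then A = \<Prod>g^(k0 m_g - v_g) / p^(k0 n) and
  B = \<Prod>g^(J m_g + v_g) / p^(J n) satisfy A B = F^j, and both lie in Int(R): at a fixed divisor
  witness the kernel condition makes the shift by v invisible, while at every other point the
  valuation of f is at least n + 1, which pays for the shift. By Gauss's lemma over the DVR the
  irreducible divisors of f are prime in R[x], so exponents in their products are unique; hence A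
  is a unit times a power of F only if v is a multiple of m, which evaluation at a witness rules
  out. Since A and B do not vanish at a witness they factor into irreducibles of Int(R), and
  together these factorizations give one of F^j that is not essentially F\<cdot>\<dots>\<cdot>F.
  A nonzero rational kernel vector is scaled to an integral one.\<close>

section \<open>Valuation in a discrete valuation ring\<close>

lemma dvr_uniformizerD:
  assumes "dvr_uniformizer p"
  shows "p \<noteq> 0" "\<not> p dvd 1" "x \<noteq> 0 \<Longrightarrow> \<exists>u k. u dvd 1 \<and> x = u * p ^ k"
  using assms unfolding dvr_uniformizer_def by auto

lemma uniformizer_pow_dvd_unit_mult_iff:
  fixes p :: "'a::idom"
  assumes "dvr_uniformizer p" "u dvd 1"
  shows "p ^ i dvd u * p ^ k \<longleftrightarrow> i \<le> k"
proof
  assume dvd: "p ^ i dvd u * p ^ k"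
  show "i \<le> k"
  proof (rule ccontr)
    assume "\<not> i \<le> k"
    then have "p ^ Suc k dvd p ^ i" by (intro le_imp_power_dvd) simp
    with dvd have "p ^ k * p dvd p ^ k * u" by (metis dvd_trans mult.commute power_Suc2)
    then have "p dvd u" using dvr_uniformizerD(1)[OF assms(1)] by simp
    with assms show False using dvr_uniformizerD(2) dvd_trans by blast
  qed
qed (simp add: le_imp_power_dvd)

lemma pexp_unit_mult_pow:
  fixes p :: "'a::idom"
  assumes "dvr_uniformizer p" "u dvd 1"
  shows "pexp p (u * p ^ k) = k"
proof -
  have "{i. p ^ i dvd u * p ^ k} = {..k}"
    using uniformizer_pow_dvd_unit_mult_iff[OF assms] by auto
  then show ?thesis unfolding pexp_def by (auto intro: Max_eqI)
qed

lemma pexp_pow_uniformizer: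
  fixes p :: "'a::idom"
  assumes "dvr_uniformizer p"
  shows "pexp p (p ^ k) = k"
  using pexp_unit_mult_pow[OF assms, of 1] by simp

lemma pexp_unit:
  fixes p :: "'a::idom"
  assumes "dvr_uniformizer p" "u dvd 1"
  shows "pexp p u = 0"
  using pexp_unit_mult_pow[OF assms, of 0] by simp

lemma pow_dvd_iff_le_pexp:
  fixes p :: "'a::idom"
  assumes "dvr_uniformizer p" "x \<noteq> 0"
  shows "p ^ i dvd x \<longleftrightarrow> i \<le> pexp p x"
proof -
  obtain u k where "u dvd 1" "x = u * p ^ k" using dvr_uniformizerD(3)[OF assms] by blast
  then show ?thesis
    using pexp_unit_mult_pow[OF assms(1)] uniformizer_pow_dvd_unit_mult_iff[OF assms(1)] by simp
qed

lemma is_unit_if_pexp_eq_0: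
  fixes p :: "'a::idom"
  assumes "dvr_uniformizer p" "x \<noteq> 0" "pexp p x = 0"
  shows "x dvd 1"
proof -
  obtain u k where "u dvd 1" "x = u * p ^ k" using dvr_uniformizerD(3)[OF assms(1,2)] by blast
  with assms show ?thesis using pexp_unit_mult_pow[OF assms(1)] by simp
qed

lemma pexp_mult:
  fixes p :: "'a::idom"
  assumes "dvr_uniformizer p" "x \<noteq> 0" "y \<noteq> 0"
  shows "pexp p (x * y) = pexp p x + pexp p y"
proof -
  obtain u k where u: "u dvd 1" "x = u * p ^ k" using dvr_uniformizerD(3)[OF assms(1,2)] by blast
  obtain w l where w: "w dvd 1" "y = w * p ^ l" using dvr_uniformizerD(3)[OF assms(1,3)] by blast
  have "x * y = (u * w) * p ^ (k + l)" using u w by (simp add: power_add algebra_simps)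
  moreover have "u * w dvd 1" using mult_dvd_mono[OF u(1) w(1)] by simp
  ultimately show ?thesis using pexp_unit_mult_pow[OF assms(1)] u w by metis
qed

lemma pexp_power:
  fixes p :: "'a::idom"
  assumes "dvr_uniformizer p" "x \<noteq> 0"
  shows "pexp p (x ^ k) = k * pexp p x"
  by (induction k) (simp_all add: pexp_mult assms pexp_unit)

lemma pexp_prod:
  fixes p :: "'a::idom"
  assumes "dvr_uniformizer p" "\<And>g. g \<in> A \<Longrightarrow> h g \<noteq> 0"
  shows "pexp p (\<Prod>g\<in>A. h g) = (\<Sum>g\<in>A. pexp p (h g))"
  using assms(2)
  by (induction A rule: infinite_finite_induct) (simp_all add: pexp_unit pexp_mult assms(1))

lemma prime_elem_uniformizer:
  fixes p :: "'a::idom"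
  assumes "dvr_uniformizer p"
  shows "prime_elem p"
proof (rule prime_elemI)
  show "p \<noteq> 0" "\<not> p dvd 1" using dvr_uniformizerD[OF assms] by auto
  fix a b assume dvd: "p dvd a * b"
  show "p dvd a \<or> p dvd b"
  proof (cases "a = 0 \<or> b = 0")
    case False
    then have "1 \<le> pexp p a + pexp p b"
      using dvd pow_dvd_iff_le_pexp[OF assms, of "a * b" 1] pexp_mult[OF assms] by simp
    then show ?thesis using pow_dvd_iff_le_pexp[OF assms, of _ 1] False by fastforce
  qed auto
qed

section \<open>Gauss's lemma over a discrete valuation ring\<close>

text \<open>Since R is a DVR, q is p-primitive exactly when its content is a unit.\<close>
definition p_primitive :: "'a::idom \<Rightarrow> 'a poly \<Rightarrow> bool" where
  "p_primitive p q \<longleftrightarrow> q \<noteq> 0 \<and> \<not> [:p:] dvd q"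

lemma p_primitive_mult:
  fixes p :: "'a::idom"
  assumes "dvr_uniformizer p" "p_primitive p a" "p_primitive p b"
  shows "p_primitive p (a * b)"
  using assms lift_prime_elem_poly[OF prime_elem_uniformizer[OF assms(1)]]
  unfolding p_primitive_def by (auto simp: prime_elem_dvd_mult_iff)

lemma fract_poly_clear_denominators:
  fixes Q :: "'a::idom fract poly"
  shows "\<exists>d q. d \<noteq> 0 \<and> smult (to_fract d) Q = fract_poly q"
proof (induction Q)
  case 0
  show ?case by (intro exI[of _ 1] exI[of _ 0]) simp
next
  case (pCons c Q)
  obtain d q where dq: "d \<noteq> 0" "smult (to_fract d) Q = fract_poly q" using pCons.IH by blast
  obtain a b where "c = Fract a b" "b \<noteq> 0" by (cases c)
  then have ab: "c = to_fract a / to_fract b" "b \<noteq> 0" by (simp_all add: Fract_conv_to_fract)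
  have "smult (to_fract (b * d)) (pCons c Q) =
      pCons (to_fract (a * d)) (smult (to_fract b) (smult (to_fract d) Q))"
    using ab(2) by (simp add: ab(1) field_simps)
  also have "\<dots> = fract_poly (pCons (a * d) (smult b q))"
    by (simp add: dq(2) map_poly_pCons)
  finally show ?case using dq(1) ab(2) by (intro exI[of _ "b * d"] exI[of _ "pCons (a * d) (smult b q)"]) simp
qed

lemma p_primitive_part_exists:
  fixes p :: "'a::idom"
  assumes "dvr_uniformizer p" "q \<noteq> 0"
  shows "\<exists>k q0. p_primitive p q0 \<and> q = smult (p ^ k) q0"
  using assms(2)
proof (induction q rule: measure_induct_rule[where f = "\<lambda>q. pexp p (lead_coeff q)"])
  case (less q)
  show ?case
  proof (cases "[:p:] dvd q")
    case False
    then show ?thesis using less.prems unfolding p_primitive_def by (intro exI[of _ 0] exI[of _ q]) simp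
  next
    case True
    then obtain q1 where q1: "q = [:p:] * q1" by blast
    have "q1 \<noteq> 0" using less.prems q1 by auto
    have "lead_coeff q = p * lead_coeff q1" using q1 by (simp add: lead_coeff_mult)
    then have "pexp p (lead_coeff q) = Suc (pexp p (lead_coeff q1))"
      using pexp_mult[OF assms(1)] pexp_pow_uniformizer[OF assms(1), of 1]
        dvr_uniformizerD(1)[OF assms(1)] \<open>q1 \<noteq> 0\<close> by simp
    then obtain k q0 where "p_primitive p q0" "q1 = smult (p ^ k) q0"
      using less.IH[OF _ \<open>q1 \<noteq> 0\<close>] by force
    then show ?thesis using q1 by (intro exI[of _ "Suc k"] exI[of _ q0]) (simp add: mult.commute)
  qed
qed

lemma fract_poly_p_primitive_decomposition:
  fixes p :: "'a::idom" and Q :: "'a fract poly"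
  assumes "dvr_uniformizer p" "Q \<noteq> 0"
  shows "\<exists>c q. c \<noteq> 0 \<and> p_primitive p q \<and> Q = smult c (fract_poly q)"
proof -
  obtain d q where dq: "d \<noteq> 0" "smult (to_fract d) Q = fract_poly q"
    using fract_poly_clear_denominators by blast
  have "q \<noteq> 0" using dq assms(2) by (metis fract_poly_eq_0_iff smult_eq_0_iff to_fract_eq_0_iff)
  then obtain k q0 where kq: "p_primitive p q0" "q = smult (p ^ k) q0"
    using p_primitive_part_exists[OF assms(1)] by blast
  have "Q = smult (inverse (to_fract d)) (smult (to_fract d) Q)" using dq(1) by simp
  also have "\<dots> = smult (to_fract (p ^ k) / to_fract d) (fract_poly q0)"
    by (simp add: dq(2) kq(2) divide_inverse mult.commute)
  finally show ?thesis
    using kq(1) dq(1) dvr_uniformizerD(1)[OF assms(1)] by (intro exI[of _ "to_fract (p ^ k) / to_fract d"]) auto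
qed

lemma dvd_if_smult_eq_p_primitive:
  fixes p :: "'a::idom"
  assumes "dvr_uniformizer p" "smult a q = smult b r" "b \<noteq> 0" "p_primitive p q"
  shows "b dvd a"
proof (cases "a = 0")
  case False
  obtain i where i: "\<not> p dvd coeff q i"
    using assms(4) unfolding p_primitive_def by (auto simp: const_poly_dvd_iff)
  have qi: "coeff q i \<noteq> 0" using i by auto
  have e: "a * coeff q i = b * coeff r i" using assms(2) by (metis coeff_smult)
  then have ri: "coeff r i \<noteq> 0" using False qi by auto
  have "pexp p (coeff q i) = 0" using pow_dvd_iff_le_pexp[OF assms(1) qi, of 1] i by simp
  then have le: "pexp p b \<le> pexp p a"
    using e pexp_mult[OF assms(1) False qi] pexp_mult[OF assms(1) assms(3) ri] by simp
  obtain u k where u: "u dvd 1" "a = u * p ^ k" using dvr_uniformizerD(3)[OF assms(1) False] by blast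
  obtain w l where w: "w dvd 1" "b = w * p ^ l" using dvr_uniformizerD(3)[OF assms(1,3)] by blast
  have "l \<le> k" using le u w pexp_unit_mult_pow[OF assms(1)] by simp
  obtain w' where w': "1 = w * w'" using w(1) by blast
  have "a = b * (w' * u * p ^ (k - l))"
    using u(2) w(2) w' \<open>l \<le> k\<close> by (simp add: algebra_simps power_add[symmetric])
  then show ?thesis by (rule dvdI)
qed simp

lemma smult_p_primitive_scalar_integral:
  fixes p :: "'a::idom"
  assumes "dvr_uniformizer p" "smult c (fract_poly q) = fract_poly r" "p_primitive p q"
  shows "\<exists>c0. c = to_fract c0"
proof -
  obtain x y where "c = Fract x y" "y \<noteq> 0" by (cases c)
  then have c: "c = to_fract x / to_fract y" and "y \<noteq> 0" by (simp_all add: Fract_conv_to_fract)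
  have "fract_poly (smult x q) = fract_poly (smult y r)"
    using arg_cong[OF assms(2), of "smult (to_fract y)"] \<open>y \<noteq> 0\<close> by (simp add: c)
  then have "y dvd x"
    using dvd_if_smult_eq_p_primitive[OF assms(1) _ \<open>y \<noteq> 0\<close> assms(3)] fract_poly_eq_iff by blast
  then obtain z where "x = y * z" by blast
  then show ?thesis using \<open>y \<noteq> 0\<close> by (intro exI[of _ z]) (simp add: c)
qed

lemma degree_fract_poly [simp]: "degree (fract_poly q) = degree q"
  by (rule degree_map_poly) simp

lemma p_primitive_if_irreducible:
  fixes p :: "'a::idom"
  assumes "dvr_uniformizer p" "irreducible g" "degree g \<ge> 1"
  shows "p_primitive p g"
  unfolding p_primitive_def
proof safe
  assume "[:p:] dvd g"
  then obtain h where h: "g = [:p:] * h" by blast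
  have "\<not> [:p:] dvd 1" using dvr_uniformizerD(2)[OF assms(1)] by (simp add: is_unit_const_poly_iff)
  moreover have "\<not> h dvd 1"
  proof
    assume "h dvd 1"
    then obtain c where "h = [:c:]" by (elim is_unit_polyE)
    then show False using h assms(3) by simp
  qed
  ultimately show False using irreducibleD[OF assms(2) h] by blast
qed (use assms(2) in auto)

lemma irreducible_fract_poly_if_irreducible:
  fixes p :: "'a::idom" and g :: "'a poly"
  assumes dvr: "dvr_uniformizer p" and irr: "irreducible g" and deg: "degree g \<ge> 1"
  shows "irreducible (fract_poly g)"
proof (rule irreducibleI)
  show nz: "fract_poly g \<noteq> 0" using irr by auto
  show "\<not> fract_poly g dvd 1" using deg is_unit_iff_degree[OF nz] by simp
  fix A B :: "'a fract poly" assume AB: "fract_poly g = A * B"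
  show "A dvd 1 \<or> B dvd 1"
  proof (rule ccontr)
    assume "\<not> (A dvd 1 \<or> B dvd 1)"
    moreover have "A \<noteq> 0" "B \<noteq> 0" using AB irr by auto
    ultimately have "degree A \<ge> 1" "degree B \<ge> 1" using is_unit_iff_degree by fastforce+
    obtain cA a where a: "cA \<noteq> 0" "p_primitive p a" "A = smult cA (fract_poly a)"
      using fract_poly_p_primitive_decomposition[OF dvr \<open>A \<noteq> 0\<close>] by blast
    obtain cB b where b: "cB \<noteq> 0" "p_primitive p b" "B = smult cB (fract_poly b)"
      using fract_poly_p_primitive_decomposition[OF dvr \<open>B \<noteq> 0\<close>] by blast
    have e: "smult (cA * cB) (fract_poly (a * b)) = fract_poly g"
      using AB a(3) b(3) by (simp add: mult_ac)
    obtain c0 where c0: "cA * cB = to_fract c0"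
      using smult_p_primitive_scalar_integral[OF dvr e p_primitive_mult[OF dvr a(2) b(2)]] by blast
    have "fract_poly g = fract_poly (smult c0 a * b)" using e c0 by simp
    then have "g = smult c0 a * b" by (simp only: fract_poly_eq_iff)
    then have "smult c0 a dvd 1 \<or> b dvd 1" using irreducibleD[OF irr] by blast
    moreover have "degree a \<ge> 1" "degree b \<ge> 1" "c0 \<noteq> 0"
      using \<open>degree A \<ge> 1\<close> \<open>degree B \<ge> 1\<close> a b c0 by auto
    ultimately show False by (auto elim!: is_unit_polyE dest: arg_cong[of _ _ degree])
  qed
qed

lemma prime_elem_if_irreducible:
  fixes p :: "'a::idom" and g :: "'a poly"
  assumes dvr: "dvr_uniformizer p" and irr: "irreducible g" and deg: "degree g \<ge> 1"
  shows "prime_elem g"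
proof (rule prime_elemI)
  show "g \<noteq> 0" "\<not> g dvd 1" using irr by (auto simp: irreducible_def)
  have prime: "prime_elem (fract_poly g)"
    by (rule field_poly_irreducible_imp_prime[OF irreducible_fract_poly_if_irreducible[OF assms]])
  have lift: "g dvd x" if dvd: "fract_poly g dvd fract_poly x" for x
  proof (cases "x = 0")
    case False
    obtain Q where Q: "fract_poly x = fract_poly g * Q" using dvd by blast
    then have "Q \<noteq> 0" using False by auto
    then obtain c q where cq: "c \<noteq> 0" "p_primitive p q" "Q = smult c (fract_poly q)"
      using fract_poly_p_primitive_decomposition[OF dvr] by blast
    have e: "smult c (fract_poly (g * q)) = fract_poly x" using Q cq(3) by (simp add: mult_ac)
    obtain c0 where "c = to_fract c0"
      using smult_p_primitive_scalar_integral[OF dvr e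
          p_primitive_mult[OF dvr p_primitive_if_irreducible[OF assms] cq(2)]] by blast
    then have "fract_poly x = fract_poly (g * smult c0 q)" using e by simp
    then have "x = g * smult c0 q" by (simp only: fract_poly_eq_iff)
    then show ?thesis by (rule dvdI)
  qed simp
  fix x y assume "g dvd x * y"
  then have "fract_poly g dvd fract_poly x * fract_poly y" by (metis fract_poly_dvd fract_poly_mult)
  then show "g dvd x \<or> g dvd y" using prime_elem_dvd_multD[OF prime] lift by blast
qed

lemma prime_elem_not_dvd_prod_powers:
  fixes g :: "'a::idom"
  assumes "prime_elem g" "finite S" "\<forall>h\<in>S. \<not> g dvd h"
  shows "\<not> g dvd (\<Prod>h\<in>S. h ^ e h)"
  using assms(2,3)
proof (induction S rule: finite_induct)
  case empty
  then show ?case using assms(1) by (simp add: prime_elem_not_unit)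
next
  case (insert x S)
  then show ?case using assms(1) by (auto simp: prime_elem_dvd_mult_iff dest: prime_elem_dvd_power)
qed

lemma prime_power_mult_cancel:
  fixes g :: "'a::idom"
  assumes "g \<noteq> 0" "\<not> g dvd X" "\<not> g dvd Y" "g ^ a * X = g ^ b * Y"
  shows "a = b"
proof -
  have False if "a < b" "g ^ a * X = g ^ b * Y" "\<not> g dvd X" for a b X Y
  proof -
    have "g ^ a * X = g ^ a * (g * (g ^ (b - Suc a) * Y))"
      using that(1,2) by (simp add: power_add[symmetric] mult.assoc flip: power_Suc)
    then have "X = g * (g ^ (b - Suc a) * Y)" using assms(1) by simp
    then show False using that(3) by (metis dvd_triv_left)
  qed
  then show ?thesis using assms by (metis linorder_neqE_nat)
qed

lemma prime_powers_exponents_unique: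
  fixes P :: "'a::idom set"
  assumes "finite P" "\<forall>g\<in>P. prime_elem g" "\<forall>g\<in>P. \<forall>h\<in>P. g dvd h \<longrightarrow> g = h"
    and "\<forall>g\<in>P. \<not> g dvd X" "\<forall>g\<in>P. \<not> g dvd Y"
    and "X * (\<Prod>h\<in>P. h ^ e h) = Y * (\<Prod>h\<in>P. h ^ e' h)" "g \<in> P"
  shows "e g = e' g"
proof -
  have prime: "prime_elem g" and others: "\<forall>h\<in>P - {g}. \<not> g dvd h" using assms(2,3,7) by auto
  have split: "(\<Prod>h\<in>P. h ^ d h) = g ^ d g * (\<Prod>h\<in>P - {g}. h ^ d h)" for d
    using assms(1,7) by (rule prod.remove)
  have "\<not> g dvd Z * (\<Prod>h\<in>P - {g}. h ^ d h)" if "\<not> g dvd Z" for Z d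
    using that prime_elem_not_dvd_prod_powers[OF prime _ others] assms(1)
    by (simp add: prime_elem_dvd_mult_iff[OF prime])
  moreover have "g ^ e g * (X * (\<Prod>h\<in>P - {g}. h ^ e h)) = g ^ e' g * (Y * (\<Prod>h\<in>P - {g}. h ^ e' h))"
    using assms(6) unfolding split by (simp add: ac_simps)
  moreover have "g \<noteq> 0" using prime by auto
  ultimately show ?thesis using prime_power_mult_cancel assms(4,5,7) by metis
qed

section \<open>Integer-valued polynomials\<close>

lemma to_fract_power: "to_fract (x ^ k) = to_fract x ^ k"
  by (induction k) simp_all

lemma fract_poly_power: "fract_poly (q ^ k) = fract_poly q ^ k"
  by (induction k) simp_all

lemma poly_fract_poly: "poly (fract_poly h) (to_fract a) = to_fract (poly h a)"
  by (induction h) (simp_all add: map_poly_pCons)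

lemma intR_mult: "X \<in> intR \<Longrightarrow> Y \<in> intR \<Longrightarrow> X * Y \<in> intR"
  unfolding intR_def by (auto simp: image_iff) (metis to_fract_mult)

lemma intR_const: "[:to_fract r:] \<in> intR"
  unfolding intR_def by auto

lemma unit_in_intR_iff: "unit_in intR U \<longleftrightarrow> (\<exists>u. (u::'a::idom) dvd 1 \<and> U = [:to_fract u:])"
proof
  assume "unit_in intR U"
  then obtain W where W: "U \<in> intR" "W \<in> intR" "U * W = 1" unfolding unit_in_def by blast
  then have "U dvd 1" "W dvd 1" by (metis dvd_triv_left, metis dvd_triv_right)
  then obtain c d where cd: "U = [:c:]" "W = [:d:]" by (elim is_unit_polyE)
  have "poly U (to_fract 0) \<in> range to_fract" "poly W (to_fract 0) \<in> range to_fract"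
    using W(1,2) unfolding intR_def by blast+
  then obtain u w where uw: "c = to_fract u" "d = to_fract w" using cd by auto
  have "to_fract (u * w) = to_fract 1" using W(3) cd uw by (simp add: one_pCons mult.commute)
  then have "u * w = 1" by (simp only: to_fract_eq_iff)
  then have "u dvd 1" by (rule dvdI[OF sym])
  then show "\<exists>u. u dvd 1 \<and> U = [:to_fract u:]" using cd(1) uw(1) by blast
next
  assume "\<exists>u. u dvd 1 \<and> U = [:to_fract u:]"
  then obtain u w where u: "U = [:to_fract u:]" "1 = u * w" by blast
  have "U * [:to_fract w:] = [:to_fract (u * w):]" using u(1) by simp
  then have "U * [:to_fract w:] = 1" using u(2) by (simp add: one_pCons)
  then show "unit_in intR U" unfolding unit_in_def using u(1) intR_const by blast
qed

definition poly_div_pow :: "'a::idom \<Rightarrow> nat \<Rightarrow> 'a poly \<Rightarrow> 'a fract poly" where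
  "poly_div_pow p k h = smult (inverse (to_fract (p ^ k))) (fract_poly h)"

lemma poly_div_pow_in_intR:
  fixes p :: "'a::idom"
  assumes "p \<noteq> 0" "\<And>a. p ^ k dvd poly h a"
  shows "poly_div_pow p k h \<in> intR"
  unfolding intR_def
proof safe
  fix a
  obtain c where c: "poly h a = p ^ k * c" using assms(2) by blast
  have "poly (poly_div_pow p k h) (to_fract a) = inverse (to_fract (p ^ k)) * (to_fract (p ^ k) * to_fract c)"
    by (simp add: poly_div_pow_def poly_fract_poly c del: to_fract_mult) simp
  also have "\<dots> = to_fract c" using assms(1) by (simp del: to_fract_mult)
  finally show "poly (poly_div_pow p k h) (to_fract a) \<in> range to_fract" by simp
qed

lemma poly_div_pow_mult:
  "poly_div_pow p k h * poly_div_pow p l h' = poly_div_pow p (k + l) (h * h')"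
  by (simp add: poly_div_pow_def power_add mult_ac)

lemma poly_div_pow_power: "poly_div_pow p k h ^ j = poly_div_pow p (k * j) (h ^ j)"
  by (simp add: poly_div_pow_def smult_power fract_poly_power to_fract_power power_mult power_inverse)

lemma poly_div_pow_eq_const_mult:
  fixes p :: "'a::idom"
  assumes "p \<noteq> 0" "poly_div_pow p k h = [:to_fract u:] * poly_div_pow p l h'"
  shows "smult (p ^ l) h = smult (u * p ^ k) h'"
proof -
  let ?c = "to_fract (p ^ k) * to_fract (p ^ l)"
  have "fract_poly (smult (p ^ l) h) = smult ?c (poly_div_pow p k h)"
    using assms(1) by (simp add: poly_div_pow_def field_simps)
  also have "\<dots> = smult ?c ([:to_fract u:] * poly_div_pow p l h')" by (simp only: assms(2))
  also have "\<dots> = fract_poly (smult (u * p ^ k) h')"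
    using assms(1) by (simp add: poly_div_pow_def field_simps)
  finally show ?thesis by (simp only: fract_poly_eq_iff)
qed

lemma poly_poly_div_pow_eq_0_iff:
  fixes p :: "'a::idom"
  assumes "p \<noteq> 0"
  shows "poly (poly_div_pow p k h) (to_fract a) = 0 \<longleftrightarrow> poly h a = 0"
  using assms by (simp add: poly_div_pow_def poly_fract_poly)

text \<open>Meaningful only for Y \<in> intR; otherwise the choice is arbitrary.\<close>
definition eval_intR :: "'a::idom fract poly \<Rightarrow> 'a \<Rightarrow> 'a" where
  "eval_intR Y a = (SOME r. poly Y (to_fract a) = to_fract r)"

lemma poly_eq_to_fract_eval_intR: "Y \<in> intR \<Longrightarrow> poly Y (to_fract a) = to_fract (eval_intR Y a)"
  unfolding eval_intR_def intR_def by (rule someI_ex) auto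

lemma eval_intR_mult:
  "X \<in> intR \<Longrightarrow> Y \<in> intR \<Longrightarrow> eval_intR (X * Y) a = eval_intR X a * eval_intR Y a"
  using poly_eq_to_fract_eval_intR[of X a] poly_eq_to_fract_eval_intR[of Y a]
    poly_eq_to_fract_eval_intR[OF intR_mult, of X Y a]
  by (simp flip: to_fract_mult)

lemma unit_in_intR_if_constant_unit_value:
  fixes p :: "'a::idom"
  assumes "dvr_uniformizer p" "Y \<in> intR" "eval_intR Y a \<noteq> 0" "degree Y = 0" "pexp p (eval_intR Y a) = 0"
  shows "unit_in intR Y"
proof -
  obtain c where "Y = [:c:]" using assms(4) by (elim degree_eq_zeroE)
  then have "Y = [:to_fract (eval_intR Y a):]" using poly_eq_to_fract_eval_intR[OF assms(2), of a] by simp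
  then show ?thesis
    using is_unit_if_pexp_eq_0[OF assms(1,3,5)] unit_in_intR_iff by blast
qed

text \<open>Induction on the degree plus the valuation of the value at a, a quantity that is additive
  and positive on non-units.\<close>
lemma factorization_in_intR_exists:
  fixes p :: "'a::idom" and Y :: "'a fract poly"
  assumes dvr: "dvr_uniformizer p"
  shows "Y \<in> intR \<Longrightarrow> poly Y (to_fract a) \<noteq> 0 \<Longrightarrow> \<not> unit_in intR Y \<Longrightarrow> \<exists>xs. factorization_in intR Y xs"
proof (induction Y rule: measure_induct_rule[where f = "\<lambda>Y. degree Y + pexp p (eval_intR Y a)"])
  case (less Y)
  show ?case
  proof (cases "irred_in intR Y")
    case True
    then show ?thesis unfolding factorization_in_def by (intro exI[of _ "[Y]"]) simp
  next
    case False
    then obtain A B where AB: "A \<in> intR" "B \<in> intR" "Y = A * B" "\<not> unit_in intR A" "\<not> unit_in intR B"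
      using less.prems unfolding irred_in_def by auto
    have nz: "poly A (to_fract a) \<noteq> 0" "poly B (to_fract a) \<noteq> 0" using less.prems(2) AB(3) by auto
    then have "A \<noteq> 0" "B \<noteq> 0" "eval_intR A a \<noteq> 0" "eval_intR B a \<noteq> 0"
      using poly_eq_to_fract_eval_intR AB(1,2) by fastforce+
    then have sum: "degree Y + pexp p (eval_intR Y a) =
        (degree A + pexp p (eval_intR A a)) + (degree B + pexp p (eval_intR B a))"
      using AB(3) eval_intR_mult[OF AB(1,2)] pexp_mult[OF dvr] by (simp add: degree_mult_eq)
    have "degree A + pexp p (eval_intR A a) > 0" "degree B + pexp p (eval_intR B a) > 0"
      using unit_in_intR_if_constant_unit_value[OF dvr] AB \<open>eval_intR A a \<noteq> 0\<close> \<open>eval_intR B a \<noteq> 0\<close>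
      by (meson add_gr_0 not_gr_zero)+
    then obtain xs ys where "factorization_in intR A xs" "factorization_in intR B ys"
      using less.IH[of A] less.IH[of B] AB nz sum by (metis less_add_same_cancel1 less_add_same_cancel2)
    then show ?thesis using AB(3) unfolding factorization_in_def by (intro exI[of _ "xs @ ys"]) auto
  qed
qed

lemma ess_same_in_replicate_imp_assoc_in:
  assumes "ess_same_in S xs (replicate j F)" "y \<in> set xs"
  shows "assoc_in S y F"
proof -
  obtain i where i: "i < length xs" "y = xs ! i" using assms(2) by (metis in_set_conv_nth)
  obtain \<sigma> where \<sigma>: "bij_betw \<sigma> {..<length xs} {..<length xs}"
     "\<forall>i<length xs. assoc_in S (xs ! i) (replicate j F ! \<sigma> i)" and "length xs = j"
    using assms(1) unfolding ess_same_in_def by auto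
  then have "\<sigma> i < j" using i(1) by (auto dest: bij_betwE)
  then show ?thesis using \<sigma>(2) i by auto
qed

lemma prod_list_assoc_in_intR_power:
  assumes "\<forall>y\<in>set ys. assoc_in intR y F"
  shows "\<exists>u. (u::'a::idom) dvd 1 \<and> prod_list ys = [:to_fract u:] * F ^ length ys"
  using assms
proof (induction ys)
  case Nil
  show ?case by (intro exI[of _ 1]) (simp add: one_pCons)
next
  case (Cons y ys)
  then obtain u where u: "u dvd 1" "prod_list ys = [:to_fract u:] * F ^ length ys" by auto
  obtain U where "unit_in intR U" "y = U * F" using Cons.prems unfolding assoc_in_def by auto
  then obtain w where w: "w dvd 1" "y = [:to_fract w:] * F" unfolding unit_in_intR_iff by blast
  have "w * u dvd 1" using mult_dvd_mono[OF w(1) u(1)] by simp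
  then show ?case using u(2) w(2) by (intro exI[of _ "w * u"]) (simp add: algebra_simps)
qed

lemma factorization_not_ess_same_if_non_power_factor:
  fixes p :: "'a::idom" and A B X :: "'a fract poly"
  assumes dvr: "dvr_uniformizer p" and AB: "A \<in> intR" "B \<in> intR" "A * B = X ^ j"
    and nz: "poly X (to_fract a) \<noteq> 0" and non_power: "\<forall>u k. u dvd 1 \<longrightarrow> A \<noteq> [:to_fract u:] * X ^ k"
  shows "\<exists>xs. factorization_in intR (X ^ j) xs \<and> \<not> ess_same_in intR xs (replicate j X)"
proof -
  have "\<not> unit_in intR A"
  proof
    assume "unit_in intR A"
    then obtain u where "u dvd 1" "A = [:to_fract u:] * X ^ 0" unfolding unit_in_intR_iff by auto
    then show False using non_power by blast
  qed
  moreover have "\<not> unit_in intR B"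
  proof
    assume "unit_in intR B"
    then obtain w w' where w: "B = [:to_fract w:]" "1 = w * w'" unfolding unit_in_intR_iff by blast
    have "B * [:to_fract w':] = [:to_fract (w * w'):]" using w(1) by simp
    then have "B * [:to_fract w':] = 1" using w(2) by (simp add: one_pCons)
    then have "A = [:to_fract w':] * (A * B)" by (metis mult.commute mult.left_commute mult_1)
    then have "A = [:to_fract w':] * X ^ j" using AB(3) by simp
    moreover have "w' dvd 1" using w(2) by (metis dvd_triv_right)
    ultimately show False using non_power by blast
  qed
  moreover have "poly A (to_fract a) \<noteq> 0" "poly B (to_fract a) \<noteq> 0"
    using arg_cong[OF AB(3), of "\<lambda>Y. poly Y (to_fract a)"] nz by (auto simp: poly_power)
  ultimately obtain xs ys where xs: "factorization_in intR A xs" and ys: "factorization_in intR B ys"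
    using factorization_in_intR_exists[OF dvr AB(1)] factorization_in_intR_exists[OF dvr AB(2)] by blast
  then have fac: "factorization_in intR (X ^ j) (xs @ ys)"
    using AB(3) unfolding factorization_in_def by auto
  have "\<not> ess_same_in intR (xs @ ys) (replicate j X)"
  proof
    assume "ess_same_in intR (xs @ ys) (replicate j X)"
    then have "\<forall>y\<in>set xs. assoc_in intR y X" using ess_same_in_replicate_imp_assoc_in by fastforce
    then obtain u where "u dvd 1" "prod_list xs = [:to_fract u:] * X ^ length xs"
      using prod_list_assoc_in_intR_power by blast
    then show False using non_power xs unfolding factorization_in_def by auto
  qed
  with fac show ?thesis by blast
qed

section \<open>The fixed divisor kernel\<close>

lemma fixdiv_val_le: "fixdiv_val p f \<le> val p (poly f a)"
  unfolding fixdiv_val_def by (rule INF_lower) simp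

lemma fixdiv_val_attained:
  assumes "fixdiv_val p f = enat n"
  shows "\<exists>w. val p (poly f w) = enat n"
proof (rule ccontr)
  assume "\<nexists>w. val p (poly f w) = enat n"
  then have "enat (Suc n) \<le> val p (poly f a)" for a
    using fixdiv_val_le[of p f a] assms by (metis Suc_ile_eq order_le_neq_trans)
  then have "enat (Suc n) \<le> fixdiv_val p f" unfolding fixdiv_val_def by (rule INF_greatest)
  then show False using assms by simp
qed

lemma fdk_smult: "u \<in> fdk p f P \<Longrightarrow> (\<lambda>g. c * u g) \<in> fdk p f P"
  unfolding fdk_def by (simp add: mult.assoc flip: sum_distrib_left)

lemma rat_common_denominator:
  fixes u :: "'c \<Rightarrow> rat"
  assumes "finite P"
  shows "\<exists>D::int. D > 0 \<and> (\<forall>g\<in>P. of_int D * u g \<in> \<int>)"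
proof -
  define d where "d g = snd (quotient_of (u g))" for g
  define D where "D = (\<Prod>g\<in>P. d g)"
  have d_pos: "d g > 0" for g unfolding d_def using quotient_of_denom_pos' by blast
  have "of_int D * u g \<in> \<int>" if "g \<in> P" for g
  proof -
    have "d g dvd D" unfolding D_def using that assms by (intro dvd_prodI)
    then obtain c where c: "D = d g * c" by blast
    obtain a b where ab: "quotient_of (u g) = (a, b)" by (cases "quotient_of (u g)")
    have "d g = b" using ab by (simp add: d_def)
    moreover have "u g = of_int a / of_int b" "b > 0"
      using quotient_of_div[OF ab] quotient_of_denom_pos[OF ab] by simp_all
    ultimately have "of_int D * u g = of_int (c * a)" using c by simp
    then show ?thesis by simp
  qed
  moreover have "D > 0" unfolding D_def using d_pos by (simp add: prod_pos)
  ultimately show ?thesis by blast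
qed

lemma fdk_integral_vector:
  assumes "finite P" "u \<in> fdk p f P" "u \<noteq> (\<lambda>_. 0)"
  shows "\<exists>v. (\<lambda>g. of_int (v g)) \<in> fdk p f P \<and> (\<exists>g\<in>P. v g \<noteq> 0)"
proof -
  obtain D :: int where D: "D > 0" "\<forall>g\<in>P. of_int D * u g \<in> \<int>"
    using rat_common_denominator[OF assms(1)] by blast
  have support: "u g = 0" if "g \<notin> P" for g using assms(2) that by (simp add: fdk_def)
  have v: "of_int \<lfloor>of_int D * u g\<rfloor> = of_int D * u g" for g
  proof (cases "g \<in> P")
    case True
    then show ?thesis using D(2) by (auto elim!: Ints_cases)
  qed (simp add: support)
  obtain g where "u g \<noteq> 0" using assms(3) by blast
  then have "g \<in> P" using support by blast
  have "of_int \<lfloor>of_int D * u g\<rfloor> \<noteq> (0::rat)" unfolding v using D(1) \<open>u g \<noteq> 0\<close> by simp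
  then have "\<lfloor>of_int D * u g\<rfloor> \<noteq> 0" by (metis of_int_0)
  have "(\<lambda>g. of_int \<lfloor>of_int D * u g\<rfloor>) \<in> fdk p f P"
    unfolding v using fdk_smult[OF assms(2)] .
  then show ?thesis using \<open>g \<in> P\<close> \<open>\<lfloor>of_int D * u g\<rfloor> \<noteq> 0\<close> by (intro exI[of _ "\<lambda>g. \<lfloor>of_int D * u g\<rfloor>"]) blast
qed

lemma int_le_ceiling_mult:
  fixes r :: rat
  assumes "of_int x / of_nat m \<le> r" "m > 0"
  shows "x \<le> \<lceil>r\<rceil> * int m"
proof -
  have "of_int x \<le> r * of_nat m" using assms by (simp add: pos_divide_le_eq)
  also have "\<dots> \<le> of_int \<lceil>r\<rceil> * of_nat m" by (intro mult_right_mono) simp_all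
  finally have "(of_int x :: rat) \<le> of_int (\<lceil>r\<rceil> * int m)" by simp
  then show ?thesis by (simp only: of_int_le_iff)
qed

lemma norm_pos_ratio_nonneg: "finite P \<Longrightarrow> 0 \<le> norm_pos_ratio P v m"
  unfolding norm_pos_ratio_def by (simp add: Max_ge_iff)

lemma norm_neg_ratio_nonneg: "finite P \<Longrightarrow> 0 \<le> norm_neg_ratio P v m"
  unfolding norm_neg_ratio_def by (simp add: Max_ge_iff)

lemma le_ceiling_norm_pos_ratio:
  assumes "finite P" "g \<in> P" "m g > 0"
  shows "v g \<le> \<lceil>norm_pos_ratio P v m\<rceil> * int (m g)"
proof -
  have "of_int (max (v g) 0) / of_nat (m g) \<le> norm_pos_ratio P v m"
    unfolding norm_pos_ratio_def using assms(1,2) by (intro Max_ge) auto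
  then have "max (v g) 0 \<le> \<lceil>norm_pos_ratio P v m\<rceil> * int (m g)" by (rule int_le_ceiling_mult[OF _ assms(3)])
  then show ?thesis by linarith
qed

lemma le_ceiling_norm_neg_ratio:
  assumes "finite P" "g \<in> P" "m g > 0"
  shows "- v g \<le> \<lceil>norm_neg_ratio P v m\<rceil> * int (m g)"
proof -
  have "of_int (- min (v g) 0) / of_nat (m g) \<le> norm_neg_ratio P v m"
    unfolding norm_neg_ratio_def using assms(1,2) by (intro Max_ge) auto
  then have "- min (v g) 0 \<le> \<lceil>norm_neg_ratio P v m\<rceil> * int (m g)" by (rule int_le_ceiling_mult[OF _ assms(3)])
  then show ?thesis by linarith
qed

lemma shifted_valuation_bound:
  fixes K n s V S :: int
  assumes "0 \<le> n" "0 \<le> s" "(n + 1) * s \<le> K" "n \<le> V" "V = n \<longrightarrow> S = 0" "S \<le> s * V"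
  shows "K * n \<le> K * V - S"
proof (cases "V = n")
  case False
  then have "n + 1 \<le> V" using assms(4) by simp
  have "0 \<le> n * s" using assms(1,2) by simp
  then have "s \<le> K" using assms(3) by (simp add: algebra_simps)
  have "K * n \<le> (K - s) * (n + 1)" using assms(3) by (simp add: algebra_simps)
  also have "\<dots> \<le> (K - s) * V" using \<open>n + 1 \<le> V\<close> \<open>s \<le> K\<close> by (intro mult_left_mono) simp_all
  also have "\<dots> \<le> K * V - S" using assms(6) by (simp add: algebra_simps)
  finally show ?thesis .
qed (use assms(5) in simp)

lemma shifted_exponent_nonneg:
  fixes s w :: int
  assumes "0 \<le> s" "int (n + 1) * s \<le> int K" "w \<le> s * int m"
  shows "0 \<le> int K * int m - w"
proof -
  have "0 \<le> int n * s" using assms(1) by simp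
  then have "s \<le> int K" using assms(2) by (simp add: algebra_simps)
  then have "s * int m \<le> int K * int m" by (rule mult_right_mono) simp
  then show ?thesis using assms(3) by linarith
qed

section \<open>Polynomials with a given fixed divisor\<close>

locale fixdiv_setting =
  fixes p :: "'a::idom" and f :: "'a poly" and P :: "'a poly set"
    and m :: "'a poly \<Rightarrow> nat" and n :: nat
  assumes uniformizer: "dvr_uniformizer p"
    and primitive: "primitive f"
    and nonconstant: "degree f > 0"
    and divisor_set: "irred_divisor_set f P"
    and factorization: "f = (\<Prod>g\<in>P. g ^ m g)"
    and fixdiv: "fixdiv_val p f = enat n"
    and fixdiv_pos: "n \<ge> 1"
begin

lemma p_nonzero: "p \<noteq> 0"
  using dvr_uniformizerD(1)[OF uniformizer] .

lemma finite_divisors: "finite P"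
  using nonconstant factorization by (cases "finite P") auto

lemma divisor_irreducible: "g \<in> P \<Longrightarrow> irreducible g"
  using divisor_set by (simp add: irred_divisor_set_def)

lemma divisor_dvd: "g \<in> P \<Longrightarrow> g dvd f"
  using divisor_set by (simp add: irred_divisor_set_def)

lemma divisor_nonconstant:
  assumes "g \<in> P"
  shows "degree g \<ge> 1"
proof (rule ccontr)
  assume "\<not> degree g \<ge> 1"
  then obtain c where c: "g = [:c:]" by (metis degree_eq_zeroE less_one not_le)
  have "g dvd f" "irreducible g" using divisor_dvd divisor_irreducible assms by auto
  then have "\<forall>i. c dvd coeff f i" using c const_poly_dvd_iff by blast
  moreover obtain cc where "(\<Sum>i\<le>degree f. cc i * coeff f i) = 1"
    using primitive unfolding primitive_def by blast
  ultimately have "c dvd (\<Sum>i\<le>degree f. cc i * coeff f i)" by (intro dvd_sum) simp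
  then have "c dvd 1" using \<open>(\<Sum>i\<le>degree f. cc i * coeff f i) = 1\<close> by simp
  then show False using \<open>irreducible g\<close> c by (simp add: is_unit_const_poly_iff irreducible_def)
qed

lemma divisor_prime: "g \<in> P \<Longrightarrow> prime_elem g"
  using prime_elem_if_irreducible[OF uniformizer divisor_irreducible divisor_nonconstant] by blast

lemma divisor_dvd_divisor:
  assumes "g \<in> P" "h \<in> P" "g dvd h"
  shows "g = h"
proof -
  obtain q where q: "h = g * q" using assms(3) by blast
  have irr: "irreducible h" "irreducible g" using assms divisor_irreducible by auto
  have "\<not> g dvd 1" using irr(2) by (simp add: irreducible_def)
  then have "q dvd 1" using irreducibleD[OF irr(1) q] by blast
  then obtain q' where "1 = q * q'" by blast
  then have "g = h * q'" using q by (simp add: mult.assoc)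
  then have "h dvd g" by simp
  then show ?thesis using assms divisor_set by (simp add: irred_divisor_set_def)
qed

lemma divisor_not_dvd_const:
  assumes "g \<in> P" "c \<noteq> 0"
  shows "\<not> g dvd [:c:]"
proof
  assume "g dvd [:c:]"
  then have "degree g \<le> degree [:c:]" using assms(2) by (intro dvd_imp_degree_le) auto
  then show False using divisor_nonconstant[OF assms(1)] by simp
qed

lemma divisor_exponents_unique:
  assumes "smult c (\<Prod>h\<in>P. h ^ e h) = smult c' (\<Prod>h\<in>P. h ^ e' h)" "c \<noteq> 0" "c' \<noteq> 0" "g \<in> P"
  shows "e g = e' g"
  using prime_powers_exponents_unique[OF finite_divisors, of "[:c:]" "[:c':]" e e' g]
    divisor_prime divisor_dvd_divisor divisor_not_dvd_const assms by simp

lemma multiplicity_pos: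
  assumes "g \<in> P"
  shows "m g > 0"
proof (rule ccontr)
  assume "\<not> m g > 0"
  then have "f = (\<Prod>h\<in>P - {g}. h ^ m h)"
    using factorization prod.remove[OF finite_divisors assms, of "\<lambda>h. h ^ m h"] by simp
  moreover have "\<not> g dvd (\<Prod>h\<in>P - {g}. h ^ m h)"
    using prime_elem_not_dvd_prod_powers[OF divisor_prime[OF assms]] finite_divisors
      divisor_dvd_divisor assms by blast
  ultimately show False using divisor_dvd[OF assms] by simp
qed

lemma divisor_poly_nonzero:
  assumes "poly f x \<noteq> 0" "g \<in> P"
  shows "poly g x \<noteq> 0"
  using assms divisor_dvd[OF assms(2)] by (auto elim!: dvdE)

lemma pexp_poly_f:
  assumes "poly f x \<noteq> 0"
  shows "pexp p (poly f x) = (\<Sum>g\<in>P. m g * pexp p (poly g x))"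
proof -
  have "poly f x = (\<Prod>g\<in>P. poly g x ^ m g)" by (subst factorization) (simp add: poly_prod)
  then show ?thesis
    using divisor_poly_nonzero[OF assms] by (simp add: pexp_prod[OF uniformizer] pexp_power[OF uniformizer])
qed

lemma fixdiv_le_pexp: "poly f x \<noteq> 0 \<Longrightarrow> n \<le> pexp p (poly f x)"
  using fixdiv_val_le[of p f x] fixdiv by (simp add: val_def)

lemma witness_exists: "\<exists>w. poly f w \<noteq> 0 \<and> pexp p (poly f w) = n"
  using fixdiv_val_attained[OF fixdiv] by (auto simp: val_def split: if_splits)

lemma witnesses_iff: "x \<in> witnesses p f \<longleftrightarrow> poly f x \<noteq> 0 \<and> pexp p (poly f x) = n"
  using fixdiv by (simp add: witnesses_def val_def)

lemma fdk_of_int_witness_sum: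
  assumes "(\<lambda>g. of_int (v g)) \<in> fdk p f P" "x \<in> witnesses p f"
  shows "(\<Sum>g\<in>P. v g * int (pexp p (poly g x))) = 0"
proof -
  have "(\<Sum>g\<in>P. of_int (v g) * of_nat (pexp p (poly g x))) = (0::rat)"
    using assms unfolding fdk_def by blast
  then have "of_int (\<Sum>g\<in>P. v g * int (pexp p (poly g x))) = (0::rat)" by simp
  then show ?thesis by (simp only: of_int_eq_0_iff)
qed

lemma poly_prod_shifted_powers_eq_0:
  assumes "poly f x = 0" and bound: "\<forall>g\<in>P. w g \<le> s * int (m g)" and "0 \<le> s"
    and K: "int (n + 1) * s \<le> int K" "K > 0"
  shows "poly (\<Prod>g\<in>P. g ^ nat (int K * int (m g) - w g)) x = 0"
proof -
  have "poly f x = (\<Prod>g\<in>P. poly g x ^ m g)" by (subst factorization) (simp add: poly_prod)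
  then obtain g where g: "g \<in> P" "poly g x = 0"
    using assms(1) finite_divisors by (auto simp: prod_zero_iff)
  have "s < int K"
  proof (cases "s = 0")
    case False
    then have "2 * s \<le> int (n + 1) * s" using fixdiv_pos \<open>0 \<le> s\<close> by (intro mult_right_mono) auto
    then show ?thesis using K False \<open>0 \<le> s\<close> by linarith
  qed (use K in simp)
  then have "s * int (m g) < int K * int (m g)" using multiplicity_pos[OF g(1)] by simp
  moreover have "w g \<le> s * int (m g)" using bound g(1) by blast
  ultimately have "nat (int K * int (m g) - w g) > 0" by simp
  then have "poly (g ^ nat (int K * int (m g) - w g)) x = 0" using g(2) by simp
  then show ?thesis unfolding poly_prod using g(1) finite_divisors by (intro prod_zero) blast+
qed

lemma pow_dvd_poly_prod_shifted_powers:
  assumes bound: "\<forall>g\<in>P. w g \<le> s * int (m g)" and "0 \<le> s" and K: "int (n + 1) * s \<le> int K"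
    and kernel: "\<forall>x\<in>witnesses p f. (\<Sum>g\<in>P. w g * int (pexp p (poly g x))) = 0"
  shows "p ^ (K * n) dvd poly (\<Prod>g\<in>P. g ^ nat (int K * int (m g) - w g)) x"
proof (cases "poly f x = 0")
  case True
  then show ?thesis using poly_prod_shifted_powers_eq_0[OF True bound \<open>0 \<le> s\<close> K]
    by (cases "K = 0") simp_all
next
  case False
  define E where "E g = int (pexp p (poly g x))" for g
  have nz: "\<forall>g\<in>P. poly g x \<noteq> 0" using divisor_poly_nonzero[OF False] by blast
  have exp_nonneg: "0 \<le> int K * int (m g) - w g" if "g \<in> P" for g
    using shifted_exponent_nonneg[OF \<open>0 \<le> s\<close> K] bound that by blast
  have "int (pexp p (poly (\<Prod>g\<in>P. g ^ nat (int K * int (m g) - w g)) x))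
      = (\<Sum>g\<in>P. (int K * int (m g) - w g) * E g)"
    using nz exp_nonneg
    by (simp add: poly_prod pexp_prod[OF uniformizer] pexp_power[OF uniformizer] E_def)
  also have "\<dots> = int K * (\<Sum>g\<in>P. int (m g) * E g) - (\<Sum>g\<in>P. w g * E g)"
    by (simp add: algebra_simps sum_subtractf sum_distrib_left)
  also have "int K * int n \<le> \<dots>"
  proof (rule shifted_valuation_bound[OF _ \<open>0 \<le> s\<close>])
    have val: "int (pexp p (poly f x)) = (\<Sum>g\<in>P. int (m g) * E g)"
      using pexp_poly_f[OF False] by (simp add: E_def)
    show "int n \<le> (\<Sum>g\<in>P. int (m g) * E g)" using fixdiv_le_pexp[OF False] val by linarith
    show "(\<Sum>g\<in>P. int (m g) * E g) = int n \<longrightarrow> (\<Sum>g\<in>P. w g * E g) = 0"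
      using kernel False val witnesses_iff by (simp add: E_def)
    show "(\<Sum>g\<in>P. w g * E g) \<le> s * (\<Sum>g\<in>P. int (m g) * E g)"
      unfolding sum_distrib_left using bound
      by (intro sum_mono) (simp add: E_def mult.assoc[symmetric] mult_right_mono)
  qed (use K in \<open>simp_all add: add.commute\<close>)
  finally have "K * n \<le> pexp p (poly (\<Prod>g\<in>P. g ^ nat (int K * int (m g) - w g)) x)"
    by (simp only: of_nat_mult[symmetric] of_nat_le_iff)
  moreover have "poly (\<Prod>g\<in>P. g ^ nat (int K * int (m g) - w g)) x \<noteq> 0"
    using nz finite_divisors by (simp add: poly_prod)
  ultimately show ?thesis using pow_dvd_iff_le_pexp[OF uniformizer] by blast
qed

definition shifted_quotient :: "nat \<Rightarrow> ('a poly \<Rightarrow> int) \<Rightarrow> 'a fract poly" where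
  "shifted_quotient K w = poly_div_pow p (K * n) (\<Prod>g\<in>P. g ^ nat (int K * int (m g) - w g))"

lemma shifted_quotient_in_intR:
  assumes "(\<lambda>g. of_int (w g)) \<in> fdk p f P" "\<forall>g\<in>P. w g \<le> s * int (m g)" "0 \<le> s"
    and "int (n + 1) * s \<le> int K"
  shows "shifted_quotient K w \<in> intR"
  unfolding shifted_quotient_def
  using fdk_of_int_witness_sum[OF assms(1)]
  by (intro poly_div_pow_in_intR p_nonzero pow_dvd_poly_prod_shifted_powers[OF assms(2-4)]) blast

lemma shifted_quotient_mult:
  assumes "\<forall>g\<in>P. 0 \<le> int K * int (m g) - w g" "\<forall>g\<in>P. 0 \<le> int L * int (m g) + w g"
  shows "shifted_quotient K w * shifted_quotient L (\<lambda>g. - w g) = poly_div_pow p n f ^ (K + L)"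
proof -
  have "nat (int K * int (m g) - w g) + nat (int L * int (m g) + w g) = m g * (K + L)" if "g \<in> P" for g
  proof -
    have "int (nat (int K * int (m g) - w g)) + int (nat (int L * int (m g) + w g)) = int (m g * (K + L))"
      using assms that by (simp add: algebra_simps)
    then show ?thesis by (simp only: of_nat_add[symmetric] of_nat_eq_iff)
  qed
  then have "(\<Prod>g\<in>P. g ^ nat (int K * int (m g) - w g)) * (\<Prod>g\<in>P. g ^ nat (int L * int (m g) + w g))
      = (\<Prod>g\<in>P. (g ^ m g) ^ (K + L))"
    by (simp add: prod.distrib[symmetric] power_mult[symmetric] flip: power_add)
  also have "\<dots> = f ^ (K + L)" by (simp add: factorization prod_power_distrib)
  finally have "shifted_quotient K w * shifted_quotient L (\<lambda>g. - w g) = poly_div_pow p (K * n + L * n) (f ^ (K + L))"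
    unfolding shifted_quotient_def poly_div_pow_mult by simp
  also have "K * n + L * n = n * (K + L)" by (simp add: algebra_simps)
  finally show ?thesis by (simp only: poly_div_pow_power)
qed

lemma shifted_quotient_not_unit_mult_power:
  assumes kernel: "(\<lambda>g. of_int (w g)) \<in> fdk p f P" and nonzero: "\<exists>g\<in>P. w g \<noteq> 0"
    and nonneg: "\<forall>g\<in>P. 0 \<le> int K * int (m g) - w g" and "u dvd 1"
  shows "shifted_quotient K w \<noteq> [:to_fract u:] * poly_div_pow p n f ^ k"
proof
  assume "shifted_quotient K w = [:to_fract u:] * poly_div_pow p n f ^ k"
  moreover have "f ^ k = (\<Prod>g\<in>P. g ^ (m g * k))"
    by (simp add: factorization prod_power_distrib power_mult)
  ultimately have "smult (p ^ (n * k)) (\<Prod>g\<in>P. g ^ nat (int K * int (m g) - w g)) =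
      smult (u * p ^ (K * n)) (\<Prod>g\<in>P. g ^ (m g * k))"
    using poly_div_pow_eq_const_mult[OF p_nonzero] by (simp add: shifted_quotient_def poly_div_pow_power)
  moreover have "p ^ (n * k) \<noteq> 0" "u * p ^ (K * n) \<noteq> 0" using p_nonzero \<open>u dvd 1\<close> by auto
  ultimately have exponents: "nat (int K * int (m g) - w g) = m g * k" if "g \<in> P" for g
    using divisor_exponents_unique[of "p ^ (n * k)" "\<lambda>g. nat (int K * int (m g) - w g)"
        "u * p ^ (K * n)" "\<lambda>g. m g * k"] that by blast
  have w_eq: "w g = (int K - int k) * int (m g)" if "g \<in> P" for g
  proof -
    have "int K * int (m g) - w g = int (m g * k)"
      using exponents[OF that] bspec[OF nonneg that] by linarith
    then show ?thesis by (simp add: algebra_simps)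
  qed
  obtain x where x: "poly f x \<noteq> 0" "pexp p (poly f x) = n" using witness_exists by blast
  then have "0 = (\<Sum>g\<in>P. w g * int (pexp p (poly g x)))"
    using fdk_of_int_witness_sum[OF kernel] witnesses_iff by simp
  also have "\<dots> = (\<Sum>g\<in>P. (int K - int k) * (int (m g) * int (pexp p (poly g x))))"
    by (rule sum.cong) (simp_all add: w_eq mult.assoc)
  also have "\<dots> = (int K - int k) * (\<Sum>g\<in>P. int (m g) * int (pexp p (poly g x)))"
    by (simp only: sum_distrib_left)
  also have "(\<Sum>g\<in>P. int (m g) * int (pexp p (poly g x))) = int n"
    using pexp_poly_f[OF x(1)] x(2) by simp
  finally have "K = k" using fixdiv_pos by simp
  then show False using w_eq nonzero by auto
qed

lemma power_splits_off_non_power: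
  assumes kernel: "(\<lambda>g. of_int (v g)) \<in> fdk p f P" and nonzero: "\<exists>g\<in>P. v g \<noteq> 0"
    and pos: "\<forall>g\<in>P. v g \<le> s * int (m g)" and neg: "\<forall>g\<in>P. - v g \<le> t * int (m g)"
    and "0 \<le> s" "0 \<le> t" and j: "int (n + 1) * (s + t) \<le> int j"
  shows "\<exists>A B. A \<in> intR \<and> B \<in> intR \<and> A * B = poly_div_pow p n f ^ j \<and>
           (\<forall>u k. u dvd 1 \<longrightarrow> A \<noteq> [:to_fract u:] * poly_div_pow p n f ^ k)"
proof -
  define k0 where "k0 = nat (int (n + 1) * s)"
  define J where "J = j - k0"
  have k0: "int (n + 1) * s \<le> int k0" using \<open>0 \<le> s\<close> by (simp add: k0_def)
  have "int k0 + int (n + 1) * t \<le> int j" using j \<open>0 \<le> s\<close> by (simp add: k0_def distrib_left)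
  moreover have "0 \<le> int (n + 1) * t" using \<open>0 \<le> t\<close> by simp
  ultimately have j_eq: "j = k0 + J" and J: "int (n + 1) * t \<le> int J"
    unfolding J_def by linarith+
  have kernel_neg: "(\<lambda>g. of_int (- v g)) \<in> fdk p f P"
    using fdk_smult[OF kernel, of "-1"] by simp
  have nonneg: "\<forall>g\<in>P. 0 \<le> int k0 * int (m g) - v g" "\<forall>g\<in>P. 0 \<le> int J * int (m g) + v g"
    using shifted_exponent_nonneg[OF \<open>0 \<le> s\<close> k0] shifted_exponent_nonneg[OF \<open>0 \<le> t\<close> J] pos neg
    by (metis diff_minus_eq_add)+
  show ?thesis
  proof (intro exI conjI allI impI)
    show "shifted_quotient k0 v \<in> intR" by (rule shifted_quotient_in_intR[OF kernel pos \<open>0 \<le> s\<close> k0])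
    show "shifted_quotient J (\<lambda>g. - v g) \<in> intR"
      by (rule shifted_quotient_in_intR[OF kernel_neg neg \<open>0 \<le> t\<close> J])
    show "shifted_quotient k0 v * shifted_quotient J (\<lambda>g. - v g) = poly_div_pow p n f ^ j"
      unfolding j_eq by (rule shifted_quotient_mult[OF nonneg])
    show "shifted_quotient k0 v \<noteq> [:to_fract u:] * poly_div_pow p n f ^ k" if "u dvd 1" for u k
      by (rule shifted_quotient_not_unit_mult_power[OF kernel nonzero nonneg(1) that])
  qed
qed

lemma power_factorization_not_ess_same:
  assumes "(\<lambda>g. of_int (v g)) \<in> fdk p f P" "\<exists>g\<in>P. v g \<noteq> 0"
    and "\<forall>g\<in>P. v g \<le> s * int (m g)" "\<forall>g\<in>P. - v g \<le> t * int (m g)"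
    and "0 \<le> s" "0 \<le> t" "int (n + 1) * (s + t) \<le> int j"
  shows "\<exists>xs. factorization_in intR (poly_div_pow p n f ^ j) xs \<and>
             \<not> ess_same_in intR xs (replicate j (poly_div_pow p n f))"
proof -
  obtain w where "poly f w \<noteq> 0" using witness_exists by blast
  then have "poly (poly_div_pow p n f) (to_fract w) \<noteq> 0"
    by (simp add: poly_poly_div_pow_eq_0_iff p_nonzero)
  moreover obtain A B where "A \<in> intR" "B \<in> intR" "A * B = poly_div_pow p n f ^ j"
    "\<forall>u k. u dvd 1 \<longrightarrow> A \<noteq> [:to_fract u:] * poly_div_pow p n f ^ k"
    using power_splits_off_non_power[OF assms] by blast
  ultimately show ?thesis by (intro factorization_not_ess_same_if_non_power_factor[OF uniformizer]) auto
qed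

lemma power_factorization_not_ess_same_norm_bound:
  assumes "(\<lambda>g. of_int (v g)) \<in> fdk p f P" "\<exists>g\<in>P. v g \<noteq> 0"
    and "int (n + 1) * (\<lceil>norm_pos_ratio P v m\<rceil> + \<lceil>norm_neg_ratio P v m\<rceil>) \<le> int j"
  shows "\<exists>xs. factorization_in intR (poly_div_pow p n f ^ j) xs \<and>
             \<not> ess_same_in intR xs (replicate j (poly_div_pow p n f))"
proof (rule power_factorization_not_ess_same[OF assms(1,2) _ _ _ _ assms(3)])
  show "\<forall>g\<in>P. v g \<le> \<lceil>norm_pos_ratio P v m\<rceil> * int (m g)"
    using le_ceiling_norm_pos_ratio[OF finite_divisors] multiplicity_pos by blast
  show "\<forall>g\<in>P. - v g \<le> \<lceil>norm_neg_ratio P v m\<rceil> * int (m g)"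
    using le_ceiling_norm_neg_ratio[OF finite_divisors] multiplicity_pos by blast
  show "0 \<le> \<lceil>norm_pos_ratio P v m\<rceil>" "0 \<le> \<lceil>norm_neg_ratio P v m\<rceil>"
    using ceiling_mono[OF norm_pos_ratio_nonneg[OF finite_divisors]]
      ceiling_mono[OF norm_neg_ratio_nonneg[OF finite_divisors]] by simp_all
qed

end

theorem theorem1:
  fixes p :: "'a::idom" and f :: "'a poly" and P :: "'a poly set"
    and m :: "'a poly \<Rightarrow> nat" and n :: nat
  assumes "dvr_uniformizer p"
    and "finite_residue_field p"
    and "primitive f"
    and "degree f > 0"
    and "irred_divisor_set f P"
    and "f = (\<Prod>g\<in>P. g ^ m g)"
    and "fixdiv_val p f = enat n"
    and "n \<ge> 1"
  defines "F \<equiv> smult (inverse (to_fract (p ^ n))) (map_poly to_fract f)"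
  shows "(fdk p f P \<noteq> {\<lambda>_. 0} \<longrightarrow> \<not> abs_irred_in intR F)
    \<and> (\<forall>v :: 'a poly \<Rightarrow> int. \<forall>j :: nat.
         irred_in intR F \<and> (\<forall>g. g \<notin> P \<longrightarrow> v g = 0) \<and> (\<exists>g\<in>P. v g \<noteq> 0) \<and>
         (\<lambda>g. of_int (v g)) \<in> fdk p f P \<and>
         int j \<ge> int (n + 1) * (\<lceil>norm_pos_ratio P v m\<rceil> + \<lceil>norm_neg_ratio P v m\<rceil>)
         \<longrightarrow> factors_nonuniquely_in intR (F ^ j))"
proof -
  interpret fixdiv_setting p f P m n using assms(1,3-8) by unfold_locales
  have F: "F = poly_div_pow p n f" unfolding F_def poly_div_pow_def ..
  note nonunique = power_factorization_not_ess_same_norm_bound[folded F]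
  show ?thesis
  proof (intro conjI allI impI)
    assume "fdk p f P \<noteq> {\<lambda>_. 0}"
    moreover have "(\<lambda>_. 0) \<in> fdk p f P" by (simp add: fdk_def)
    ultimately obtain u where "u \<in> fdk p f P" "u \<noteq> (\<lambda>_. 0)" by blast
    then obtain v where v: "(\<lambda>g. of_int (v g)) \<in> fdk p f P" "\<exists>g\<in>P. v g \<noteq> 0"
      using fdk_integral_vector finite_divisors by blast
    define j where "j = nat (int (n + 1) * (\<lceil>norm_pos_ratio P v m\<rceil> + \<lceil>norm_neg_ratio P v m\<rceil>))"
    have "int (n + 1) * (\<lceil>norm_pos_ratio P v m\<rceil> + \<lceil>norm_neg_ratio P v m\<rceil>) \<le> int j"
      unfolding j_def by simp
    then obtain xs where "factorization_in intR (F ^ j) xs" "\<not> ess_same_in intR xs (replicate j F)"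
      using nonunique[OF v] by blast
    then show "\<not> abs_irred_in intR F" unfolding abs_irred_in_def by blast
  next
    fix v :: "'a poly \<Rightarrow> int" and j :: nat
    assume H: "irred_in intR F \<and> (\<forall>g. g \<notin> P \<longrightarrow> v g = 0) \<and> (\<exists>g\<in>P. v g \<noteq> 0) \<and>
      (\<lambda>g. of_int (v g)) \<in> fdk p f P \<and>
      int j \<ge> int (n + 1) * (\<lceil>norm_pos_ratio P v m\<rceil> + \<lceil>norm_neg_ratio P v m\<rceil>)"
    then obtain xs where "factorization_in intR (F ^ j) xs" "\<not> ess_same_in intR xs (replicate j F)"
      using nonunique by blast
    moreover have "factorization_in intR (F ^ j) (replicate j F)"
      using H by (simp add: factorization_in_def)
    ultimately show "factors_nonuniquely_in intR (F ^ j)" unfolding factors_nonuniquely_in_def by blast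
  qed
qed

end
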